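(* Let $n$ be an odd integer with prime factorisation $n=p_{1}^{J_{1}}p_{2}^{J_{2}}\cdots p_{s}^{J_{s}}$, where $s\geq 2$, $p_1,\dots,p_s$ are distinct primes, $J_i\ge 1$, and for every $r\in\{1,\dots,s-1\}$ we have $\prod_{i=1}^{r}p_{i}^{J_{i}}<p_{r+1}$. Let $\mathcal{D}_{S_{1}},\mathcal{D}_{S_{2}}$ be subsets of $\mathcal{D}_{[n]}\setminus\{n\}$. If $\mathrm{Spec}(\mathrm{ICG}(n,\mathcal{D}_{S_{1}}))=\mathrm{Spec}(\mathrm{ICG}(n,\mathcal{D}_{S_{2}}))$, then $\mathcal{D}_{S_{1}}=\mathcal{D}_{S_{2}}$ (equivalently $S_1=S_2$).
   Context: For an integer $n\ge1$, identify $\mathbb{Z}_n$ with $[n]=\{1,\dots,n\}$ ($n$ playing the role of $0$). For a positive divisor $d$ of $n$, $G_n(d)=\{j\in[n]:\gcd(j,n)=d\}$. $\mathcal{D}_{[n]}$ denotes the set of all positive divisors of $n$. For $\mathcal{D}\subseteq\mathcal{D}_{[n]}\setminus\{n\}$, $\mathrm{ICG}(n,\mathcal{D})$ denotes the circulant graph $\mathrm{Cay}(\mathbb{Z}_n,S)$ with connection set $S=\bigcup_{d\in\mathcal{D}}G_n(d)$ (vertex set $\mathbb{Z}_n$, $g\sim h$ iff $h-g\in S$); we write $\mathcal{D}=\mathcal{D}_S$. These are exactly the integral circulant graphs on $\mathbb{Z}_n$. $\mathrm{Spec}$ denotes the multiset of eigenvalues of the adjacency matrix. *)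

theory Defs
  imports "Jordan_Normal_Form.Char_Poly" "HOL-Computational_Algebra.Polynomial"
begin

text \<open>Z_n identified with [n] = {1..n}; residue class of an integer x as an element of [n].\<close>
definition to_bracket :: "nat \<Rightarrow> int \<Rightarrow> nat" where
  "to_bracket n x = (if x mod int n = 0 then n else nat (x mod int n))"

definition Gn :: "nat \<Rightarrow> nat \<Rightarrow> nat set" where
  "Gn n d = {j \<in> {1..n}. gcd j n = d}"

definition conn_set :: "nat \<Rightarrow> nat set \<Rightarrow> nat set" where
  "conn_set n D = (\<Union>d\<in>D. Gn n d)"

definition circ_adj :: "nat \<Rightarrow> nat set \<Rightarrow> complex mat" where
  "circ_adj n S = mat n n (\<lambda>(g, h). if to_bracket n (int h - int g) \<in> S then 1 else 0)"

definition ICG_adj :: "nat \<Rightarrow> nat set \<Rightarrow> complex mat" where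
  "ICG_adj n D = circ_adj n (conn_set n D)"

definition Spec :: "complex mat \<Rightarrow> complex multiset" where
  "Spec A = proots (char_poly A)"

end

theory Submission
  imports Defs "HOL-Number_Theory.Totient"
begin

text \<open>The all-ones vector is an eigenvector of a circulant adjacency matrix for the degree
  \<open>card S\<close>, and the row sums bound the modulus of every eigenvalue, so the spectrum determines
  \<open>card S = (\<Sum>d\<in>D. totient (n div d))\<close>. Under the growth condition a set \<open>T\<close> of divisors of
  \<open>n\<close> is determined by \<open>\<Sum>e\<in>T. totient e\<close>: writing \<open>n = m * q ^ J\<close> with \<open>q\<close> the largest prime,
  every divisor is \<open>a * q ^ j\<close> with \<open>a dvd m\<close>, so the sum is \<open>\<Sum>j\<le>J. totient (q ^ j) * c j\<close> with
  digits \<open>c j\<close>, each a sum of totients of divisors of \<open>m\<close> and hence at most \<open>m \<le> q - 2\<close>. These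
  mixed-radix digits are unique, and by induction on the number of primes each digit determines its
  layer \<open>{a. a dvd m \<and> a * q ^ j \<in> T}\<close>.\<close>

lemma mixed_radix_digits_unique:
  fixes w X Y :: "nat \<Rightarrow> nat"
  assumes w: "\<And>k. (\<Sum>j<k. w j * b) < w k"
    and "\<forall>j\<le>K. X j \<le> b" and "\<forall>j\<le>K. Y j \<le> b"
    and "(\<Sum>j\<le>K. w j * X j) = (\<Sum>j\<le>K. w j * Y j)"
  shows "\<forall>j\<le>K. X j = Y j"
  using assms(2-)
proof (induction K)
  case 0
  then show ?case using w[of 0] by simp
next
  case (Suc K)
  have lower_lt: "(\<Sum>j\<le>K. w j * Z j) < w (Suc K)" if "\<forall>j\<le>Suc K. Z j \<le> b" for Z
  proof -
    have "(\<Sum>j\<le>K. w j * Z j) \<le> (\<Sum>j<Suc K. w j * b)"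
      using that by (auto simp: lessThan_Suc_atMost intro!: sum_mono)
    also have "\<dots> < w (Suc K)" by (rule w)
    finally show ?thesis .
  qed
  have div_eq: "(A + w (Suc K) * x) div w (Suc K) = x" if "A < w (Suc K)" for A x
    using that by simp
  have split: "(\<Sum>j\<le>K. w j * X j) + w (Suc K) * X (Suc K)
             = (\<Sum>j\<le>K. w j * Y j) + w (Suc K) * Y (Suc K)"
    using Suc.prems(3) by simp
  have top: "X (Suc K) = Y (Suc K)"
    using arg_cong[OF split, of "\<lambda>x. x div w (Suc K)"]
    unfolding div_eq[OF lower_lt[OF Suc.prems(1)]] div_eq[OF lower_lt[OF Suc.prems(2)]] .
  have "\<forall>j\<le>K. X j = Y j"
    by (rule Suc.IH) (use Suc.prems split top in auto)
  with top show ?case by (auto simp: le_Suc_eq)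
qed

lemma totient_prime_power_gt_sum:
  fixes q :: nat
  assumes "prime q"
  shows "(\<Sum>j<k. totient (q ^ j) * (q - 2)) < totient (q ^ k)"
proof (induction k)
  case 0 then show ?case by simp
next
  case (Suc k)
  have "(\<Sum>j<Suc k. totient (q ^ j) * (q - 2)) < totient (q ^ k) * Suc (q - 2)"
    using Suc.IH by simp
  also have "\<dots> \<le> q ^ k * (q - 1)"
    using prime_ge_2_nat[OF assms] by (intro mult_mono totient_le) auto
  also have "\<dots> = totient (q ^ Suc k)"
    using totient_prime_power_Suc[OF assms] by simp
  finally show ?case .
qed

definition totient_sum_inj :: "nat \<Rightarrow> bool" where
  "totient_sum_inj m \<longleftrightarrow> inj_on (\<lambda>T. \<Sum>e\<in>T. totient e) (Pow {d. d dvd m})"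

lemma totient_sum_inj_1: "totient_sum_inj 1"
proof -
  have "{d. d dvd (1::nat)} = {1}" by auto
  then show ?thesis by (auto simp: totient_sum_inj_def inj_on_def subset_singleton_iff)
qed

definition prime_power_layer :: "nat \<Rightarrow> nat \<Rightarrow> nat set \<Rightarrow> nat \<Rightarrow> nat set" where
  "prime_power_layer m q T j = {a. a dvd m \<and> a * q ^ j \<in> T}"

lemma prime_power_layer_subset: "prime_power_layer m q T j \<subseteq> {a. a dvd m}"
  by (auto simp: prime_power_layer_def)

lemma inj_on_mult_prime_power:
  fixes q m :: nat
  assumes "prime q" "\<not> q dvd m" "m > 0"
  shows "inj_on (\<lambda>(j, a). a * q ^ j) (UNIV \<times> {a. a dvd m})"
proof (rule inj_onI, clarsimp)
  have exponent: "multiplicity q (a * q ^ i) = i" if "a dvd m" for a i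
  proof -
    have "\<not> q dvd a" "a \<noteq> 0" using assms that dvd_trans by auto
    then show ?thesis
      using assms(1) by (simp add: prime_elem_multiplicity_mult_distrib not_dvd_imp_multiplicity_0)
  qed
  fix i j a b assume "a dvd m" "b dvd m" "a * q ^ i = b * q ^ j"
  then show "i = j \<and> a = b"
    using exponent prime_gt_0_nat[OF assms(1)] by (metis mult_right_cancel power_not_zero not_gr0)
qed

lemma divisors_mult_prime_power_eq_layers:
  fixes q m :: nat
  assumes "prime q" "T \<subseteq> {d. d dvd m * q ^ J}"
  shows "T = (\<lambda>(j, a). a * q ^ j) ` Sigma {..J} (prime_power_layer m q T)"
proof
  show "T \<subseteq> (\<lambda>(j, a). a * q ^ j) ` Sigma {..J} (prime_power_layer m q T)"
  proof
    fix e assume "e \<in> T"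
    then obtain a c where "e = a * c" "a dvd m" "c dvd q ^ J"
      using assms(2) division_decomp by blast
    moreover obtain j where "j \<le> J" "c = q ^ j"
      using divides_primepow_nat[OF assms(1)] \<open>c dvd q ^ J\<close> by blast
    ultimately show "e \<in> (\<lambda>(j, a). a * q ^ j) ` Sigma {..J} (prime_power_layer m q T)"
      using \<open>e \<in> T\<close> by (auto simp: prime_power_layer_def intro!: image_eqI[where x = "(j, a)"])
  qed
qed (auto simp: prime_power_layer_def)

lemma sum_totient_layers:
  fixes q m :: nat
  assumes q: "prime q" "\<not> q dvd m" and m: "m > 0" and T: "T \<subseteq> {d. d dvd m * q ^ J}"
  shows "(\<Sum>e\<in>T. totient e)
       = (\<Sum>j\<le>J. totient (q ^ j) * (\<Sum>a\<in>prime_power_layer m q T j. totient a))"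
proof -
  have fin: "finite (prime_power_layer m q T j)" for j
    using finite_subset[OF prime_power_layer_subset] m by simp
  have inj: "inj_on (\<lambda>(j, a). a * q ^ j) (Sigma {..J} (prime_power_layer m q T))"
    by (rule inj_on_subset[OF inj_on_mult_prime_power[OF q m]]) (use prime_power_layer_subset[of m q T] in auto)
  have "(\<Sum>e\<in>T. totient e)
      = (\<Sum>(j, a)\<in>Sigma {..J} (prime_power_layer m q T). totient (a * q ^ j))"
    by (subst divisors_mult_prime_power_eq_layers[OF q(1) T], subst sum.reindex[OF inj])
      (simp add: comp_def case_prod_beta)
  also have "\<dots> = (\<Sum>j\<le>J. \<Sum>a\<in>prime_power_layer m q T j. totient (a * q ^ j))"
    by (rule sum.Sigma[symmetric]) (use fin in auto)
  also have "\<dots> = (\<Sum>j\<le>J. \<Sum>a\<in>prime_power_layer m q T j. totient (q ^ j) * totient a)"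
  proof (intro sum.cong refl)
    fix j a assume "a \<in> prime_power_layer m q T j"
    then have "\<not> q dvd a" using q(2) dvd_trans by (auto simp: prime_power_layer_def)
    then have "coprime q a" by (rule prime_imp_coprime[OF q(1)])
    then have "coprime a (q ^ j)" by (simp add: coprime_commute)
    then show "totient (a * q ^ j) = totient (q ^ j) * totient a"
      by (simp add: totient_mult_coprime)
  qed
  finally show ?thesis by (simp add: sum_distrib_left)
qed

lemma totient_sum_inj_mult_prime_power:
  fixes q m :: nat
  assumes q: "prime q" "\<not> q dvd m" and m: "m > 0" "m + 2 \<le> q" and inj: "totient_sum_inj m"
  shows "totient_sum_inj (m * q ^ J)"
  unfolding totient_sum_inj_def
proof (rule inj_onI)
  fix T1 T2 assume "T1 \<in> Pow {d. d dvd m * q ^ J}" "T2 \<in> Pow {d. d dvd m * q ^ J}"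
    and eq: "(\<Sum>e\<in>T1. totient e) = (\<Sum>e\<in>T2. totient e)"
  then have T1: "T1 \<subseteq> {d. d dvd m * q ^ J}" and T2: "T2 \<subseteq> {d. d dvd m * q ^ J}" by auto
  have digit_le: "\<forall>j\<le>J. (\<Sum>a\<in>prime_power_layer m q T j. totient a) \<le> q - 2" for T
  proof (intro allI impI)
    fix j
    have "(\<Sum>a\<in>prime_power_layer m q T j. totient a) \<le> (\<Sum>a | a dvd m. totient a)"
      by (rule sum_mono2[OF _ prime_power_layer_subset]) (use m in simp_all)
    also have "\<dots> = m" by (rule totient_divisor_sum)
    finally show "(\<Sum>a\<in>prime_power_layer m q T j. totient a) \<le> q - 2" using m by linarith
  qed
  have "\<forall>j\<le>J. (\<Sum>a\<in>prime_power_layer m q T1 j. totient a)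
                = (\<Sum>a\<in>prime_power_layer m q T2 j. totient a)"
    by (rule mixed_radix_digits_unique[OF totient_prime_power_gt_sum[OF q(1)] digit_le digit_le
          eq[unfolded sum_totient_layers[OF q m(1) T1] sum_totient_layers[OF q m(1) T2]]])
  then have "\<forall>j\<le>J. prime_power_layer m q T1 j = prime_power_layer m q T2 j"
    using inj prime_power_layer_subset[of m q] unfolding totient_sum_inj_def inj_on_def by blast
  then have "Sigma {..J} (prime_power_layer m q T1) = Sigma {..J} (prime_power_layer m q T2)" by auto
  then show "T1 = T2"
    using divisors_mult_prime_power_eq_layers[OF q(1) T1]
      divisors_mult_prime_power_eq_layers[OF q(1) T2] by metis
qed

lemma prime_not_dvd_prod_prime_powers:
  fixes q :: nat
  assumes q: "prime q" and "finite I" and p: "\<forall>i\<in>I. prime (p i) \<and> p i \<noteq> q"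
  shows "\<not> q dvd (\<Prod>i\<in>I. p i ^ J i)"
  unfolding prime_dvd_prod_iff[OF \<open>finite I\<close> q]
proof
  assume "\<exists>i\<in>I. q dvd p i ^ J i"
  then obtain i where i: "i \<in> I" "q dvd p i ^ J i" by blast
  have "q dvd p i" by (rule prime_dvd_power[OF q i(2)])
  with i(1) p show False using primes_dvd_imp_eq[OF q] by blast
qed

lemma totient_sum_inj_prod_prime_powers:
  fixes s :: nat and p J :: "nat \<Rightarrow> nat"
  assumes odd: "odd (\<Prod>i=1..s. p i ^ J i)"
    and prime: "\<forall>i\<in>{1..s}. prime (p i)"
    and inj: "inj_on p {1..s}"
    and J: "\<forall>i\<in>{1..s}. J i \<ge> 1"
    and growth: "\<forall>r\<in>{1..s-1}. (\<Prod>i=1..r. p i ^ J i) < p (r + 1)"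
  shows "totient_sum_inj (\<Prod>i=1..s. p i ^ J i)"
proof -
  have odd_factor: "odd (p i ^ J i)" if "i \<in> {1..s}" for i
    using odd that by (simp add: even_prod_iff)
  have "totient_sum_inj (\<Prod>i=1..r. p i ^ J i)" if "r \<le> s" for r
    using that
  proof (induction r)
    case 0
    then show ?case using totient_sum_inj_1 by simp
  next
    case (Suc r)
    define N where "N = (\<Prod>i=1..r. p i ^ J i)"
    define q where "q = p (Suc r)"
    have r: "Suc r \<in> {1..s}" using Suc.prems by simp
    have q: "prime q" using prime r unfolding q_def by blast
    have N_pos: "N > 0" unfolding N_def using prime Suc.prems by (auto intro!: prod_pos prime_gt_0_nat)
    have other_primes: "\<forall>i\<in>{1..r}. prime (p i) \<and> p i \<noteq> q"
    proof
      fix i assume i: "i \<in> {1..r}"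
      then have "p i \<noteq> p (Suc r)" using inj_onD[OF inj _ _ r] Suc.prems by fastforce
      then show "prime (p i) \<and> p i \<noteq> q" using prime i Suc.prems unfolding q_def by auto
    qed
    have not_dvd: "\<not> q dvd N" unfolding N_def
      by (rule prime_not_dvd_prod_prime_powers[OF q finite_atLeastAtMost other_primes])
    have "odd N" unfolding N_def using odd_factor Suc.prems by (simp add: even_prod_iff)
    have "J (Suc r) \<ge> 1" using J r by blast
    then have "odd q" using odd_factor[OF r] by (simp add: q_def even_power)
    have "N < q"
    proof (cases "r = 0")
      case True
      then show ?thesis unfolding N_def using prime_gt_1_nat[OF q] by simp
    next
      case False
      then show ?thesis using growth Suc.prems unfolding N_def q_def by auto
    qed
    then have "N + 2 \<le> q" using \<open>odd N\<close> \<open>odd q\<close> by presburger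
    have "(\<Prod>i=1..Suc r. p i ^ J i) = N * q ^ J (Suc r)"
      unfolding N_def q_def by (simp add: prod.nat_ivl_Suc')
    moreover have "totient_sum_inj N" unfolding N_def using Suc by simp
    ultimately show ?case
      using totient_sum_inj_mult_prime_power[OF q not_dvd N_pos \<open>N + 2 \<le> q\<close>] by simp
  qed
  then show ?thesis by simp
qed

lemma eigenvalue_const_row_sums:
  fixes A :: "'a::field mat"
  assumes A: "A \<in> carrier_mat n n" and "n > 0" and rows: "\<forall>i<n. (\<Sum>j<n. A $$ (i, j)) = c"
  shows "eigenvalue A c"
proof -
  define v :: "'a vec" where "v = vec n (\<lambda>_. 1)"
  have "A *\<^sub>v v = c \<cdot>\<^sub>v v"
    using A rows by (auto simp: v_def scalar_prod_def atLeast0LessThan intro!: eq_vecI)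
  moreover have "v \<noteq> 0\<^sub>v n"
    using \<open>n > 0\<close> by (metis index_vec index_zero_vec(1) v_def zero_neq_one)
  ultimately show ?thesis
    using A unfolding eigenvalue_def eigenvector_def by (auto simp: v_def intro!: exI[of _ v])
qed

lemma norm_eigenvalue_le_row_sums:
  fixes A :: "'a::real_normed_field mat"
  assumes A: "A \<in> carrier_mat n n" and rows: "\<forall>i<n. (\<Sum>j<n. norm (A $$ (i, j))) \<le> c"
    and "eigenvalue A l"
  shows "norm l \<le> c"
proof -
  obtain v where v: "v \<in> carrier_vec n" "v \<noteq> 0\<^sub>v n" "A *\<^sub>v v = l \<cdot>\<^sub>v v"
    using \<open>eigenvalue A l\<close> A unfolding eigenvalue_def eigenvector_def by auto
  have "n > 0" using v(1,2) by (auto intro!: eq_vecI)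
  define M where "M = Max ((\<lambda>j. norm (v $ j)) ` {..<n})"
  have "M \<in> (\<lambda>j. norm (v $ j)) ` {..<n}"
    unfolding M_def using \<open>n > 0\<close> by (intro Max_in) auto
  then obtain i where i: "i < n" "norm (v $ i) = M" by auto
  have le_M: "norm (v $ j) \<le> M" if "j < n" for j
    unfolding M_def using that by (intro Max_ge) auto
  have "M > 0"
  proof (rule ccontr)
    assume "\<not> M > 0"
    then have "v = 0\<^sub>v n"
      using v(1) le_M by (intro eq_vecI) (auto, metis norm_le_zero_iff order.trans not_less)
    then show False using v(2) by simp
  qed
  have "norm l * M = norm ((A *\<^sub>v v) $ i)"
    using v(1,3) i by (simp add: norm_mult)
  also have "\<dots> = norm (\<Sum>j<n. A $$ (i, j) * v $ j)"
    using A v(1) i by (simp add: scalar_prod_def atLeast0LessThan)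
  also have "\<dots> \<le> (\<Sum>j<n. norm (A $$ (i, j)) * M)"
    by (rule order.trans[OF norm_sum sum_mono]) (simp add: norm_mult le_M mult_left_mono)
  also have "\<dots> \<le> c * M"
    using rows i \<open>M > 0\<close> by (simp add: sum_distrib_right[symmetric])
  finally show ?thesis using \<open>M > 0\<close> by simp
qed

lemma mem_Spec_iff_eigenvalue:
  assumes "A \<in> carrier_mat n n"
  shows "x \<in># Spec A \<longleftrightarrow> eigenvalue A x"
proof -
  have "char_poly A \<noteq> 0"
    using degree_monic_char_poly[OF assms] by auto
  then show ?thesis
    unfolding Spec_def using eigenvalue_root_char_poly[OF assms] by simp
qed

lemma to_bracket_mod: "n > 0 \<Longrightarrow> int (to_bracket n x) mod int n = x mod int n"
  by (auto simp: to_bracket_def)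

lemma to_bracket_in_range:
  assumes "n > 0"
  shows "to_bracket n x \<in> {1..n}"
proof -
  define r where "r = x mod int n"
  have "0 \<le> r" "r < int n" unfolding r_def using assms by simp_all
  then show ?thesis unfolding to_bracket_def r_def[symmetric] using assms by auto
qed

lemma bij_betw_to_bracket_shift:
  assumes "n > 0"
  shows "bij_betw (\<lambda>h. to_bracket n (int h - int g)) {..<n} {1..n}"
proof -
  have "inj_on (\<lambda>h. to_bracket n (int h - int g)) {..<n}"
  proof (rule inj_onI)
    fix h h' assume "h \<in> {..<n}" "h' \<in> {..<n}"
      and "to_bracket n (int h - int g) = to_bracket n (int h' - int g)"
    then have "(int h - int g) mod int n = (int h' - int g) mod int n"
      by (metis to_bracket_mod[OF assms])
    then have "int h mod int n = int h' mod int n"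
      by (metis mod_add_cong diff_add_cancel)
    then show "h = h'" using \<open>h \<in> {..<n}\<close> \<open>h' \<in> {..<n}\<close> by simp
  qed
  moreover have "(\<lambda>h. to_bracket n (int h - int g)) ` {..<n} \<subseteq> {1..n}"
    using to_bracket_in_range[OF assms] by auto
  ultimately show ?thesis
    by (simp add: bij_betw_def card_subset_eq card_image)
qed

lemma card_circ_adj_row:
  assumes "n > 0" "S \<subseteq> {1..n}"
  shows "card {j \<in> {..<n}. to_bracket n (int j - int i) \<in> S} = card S"
proof -
  define \<phi> where "\<phi> h = to_bracket n (int h - int i)" for h
  have "bij_betw \<phi> {..<n} {1..n}"
    unfolding \<phi>_def by (rule bij_betw_to_bracket_shift[OF assms(1)])
  then have "bij_betw \<phi> {j \<in> {..<n}. \<phi> j \<in> S} S"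
    using assms(2) unfolding bij_betw_def by (auto intro: inj_on_subset)
  then show ?thesis unfolding \<phi>_def by (rule bij_betw_same_card)
qed

lemma Max_norm_Spec_circ_adj:
  assumes "n > 0" "S \<subseteq> {1..n}"
  shows "Max (cmod ` set_mset (Spec (circ_adj n S))) = card S"
proof -
  have A: "circ_adj n S \<in> carrier_mat n n" by (simp add: circ_adj_def)
  have row: "(\<Sum>j<n. f (circ_adj n S $$ (i, j))) = of_nat (card S) * f 1"
    if "i < n" "f 0 = 0" for i and f :: "complex \<Rightarrow> 'b::semiring_1"
    using that card_circ_adj_row[OF assms, of i]
    by (simp add: circ_adj_def sum.If_cases if_distrib Int_def)
  have "eigenvalue (circ_adj n S) (of_nat (card S))"
    by (rule eigenvalue_const_row_sums[OF A \<open>n > 0\<close>]) (simp add: row[of _ id, simplified])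
  moreover have "cmod l \<le> card S" if "eigenvalue (circ_adj n S) l" for l
    by (rule norm_eigenvalue_le_row_sums[OF A _ that]) (simp add: row[of _ cmod])
  ultimately show ?thesis
    by (intro Max_eqI) (auto simp: mem_Spec_iff_eigenvalue[OF A] intro!: image_eqI)
qed

lemma conn_set_subset: "conn_set n D \<subseteq> {1..n}"
  unfolding conn_set_def Gn_def by auto

lemma inj_on_div_divisors:
  fixes n :: nat
  assumes "n > 0"
  shows "inj_on (\<lambda>d. n div d) {d. d dvd n}"
  using assms
  by (intro inj_onI) (metis dvd_div_mult_self mem_Collect_eq mult_cancel1 dvd_div_eq_0_iff neq0_conv)

lemma div_divisor_dvd: "d dvd n \<Longrightarrow> (n::nat) div d dvd n"
  by (metis dvd_def dvd_div_mult_self dvd_triv_right)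

lemma card_conn_set:
  assumes n: "n > 0" and D: "D \<subseteq> {d. d dvd n}"
  shows "card (conn_set n D) = (\<Sum>e\<in>(\<lambda>d. n div d) ` D. totient e)"
proof -
  have "finite D" using finite_subset[OF D] n by simp
  have "card (conn_set n D) = (\<Sum>d\<in>D. card (Gn n d))"
    unfolding conn_set_def by (rule card_UN_disjoint[OF \<open>finite D\<close>]) (auto simp: Gn_def)
  also have "\<dots> = (\<Sum>d\<in>D. totient (n div d))"
  proof (rule sum.cong[OF refl])
    fix d assume "d \<in> D"
    have "Gn n d = {k \<in> {0<..n}. gcd k n = d}" unfolding Gn_def by auto
    then show "card (Gn n d) = totient (n div d)"
      using card_gcd_eq_totient[OF n] D \<open>d \<in> D\<close> by auto
  qed
  also have "\<dots> = (\<Sum>e\<in>(\<lambda>d. n div d) ` D. totient e)"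
    using sum.reindex[OF inj_on_subset[OF inj_on_div_divisors[OF n] D], of totient] by simp
  finally show ?thesis .
qed

theorem theorem1p4:
  fixes n s :: nat and p J :: "nat \<Rightarrow> nat" and D1 D2 :: "nat set"
  assumes "odd n"
    and "s \<ge> 2"
    and "n = (\<Prod>i=1..s. p i ^ J i)"
    and "\<forall>i\<in>{1..s}. prime (p i)"
    and "inj_on p {1..s}"
    and "\<forall>i\<in>{1..s}. J i \<ge> 1"
    and "\<forall>r\<in>{1..s-1}. (\<Prod>i=1..r. p i ^ J i) < p (r + 1)"
    and "D1 \<subseteq> {d. d dvd n} - {n}"
    and "D2 \<subseteq> {d. d dvd n} - {n}"
    and "Spec (ICG_adj n D1) = Spec (ICG_adj n D2)"
  shows "D1 = D2"
proof -
  have n: "n > 0" using \<open>odd n\<close> by (rule odd_pos)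
  have D1: "D1 \<subseteq> {d. d dvd n}" and D2: "D2 \<subseteq> {d. d dvd n}" using assms(8,9) by auto
  have inj: "totient_sum_inj n"
    using totient_sum_inj_prod_prime_powers assms(1,3-7) by simp
  have "card (conn_set n D1) = card (conn_set n D2)"
    using Max_norm_Spec_circ_adj[OF n conn_set_subset, of D1]
      Max_norm_Spec_circ_adj[OF n conn_set_subset, of D2] assms(10)
    unfolding ICG_adj_def by simp
  then have "(\<Sum>e\<in>(\<lambda>d. n div d) ` D1. totient e) = (\<Sum>e\<in>(\<lambda>d. n div d) ` D2. totient e)"
    by (simp add: card_conn_set[OF n D1] card_conn_set[OF n D2])
  then have "(\<lambda>d. n div d) ` D1 = (\<lambda>d. n div d) ` D2"
    using inj D1 D2 div_divisor_dvd unfolding totient_sum_inj_def inj_on_def by blast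
  then show ?thesis
    using inj_on_image_eq_iff[OF inj_on_div_divisors[OF n] D1 D2] by simp
qed

end
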